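(* For every integer $r\ge 0$, the graph invariants $P_*^{(r)}$ and $\alpha_*^{(r)}$ are equivalent, i.e. for all graphs $G,H$: $P_*^{(r)}(G)=P_*^{(r)}(H)$ if and only if $\alpha_*^{(r)}(G)=\alpha_*^{(r)}(H)$.
   Context: Graphs are finite, simple and undirected; an $n$-vertex graph $G$ has $V(G)=\{1,\dots,n\}$ and adjacency matrix $A$. Let $\mu_1<\mu_2<\dots<\mu_m$ be the pairwise distinct eigenvalues of $A$, $E_i$ the eigenspace of $\mu_i$, and $P_i$ the matrix of the orthogonal projection of $\mathbb{R}^n$ onto $E_i$. For a vertex pair $(x,y)$ let $P_*(x,y)=(P_1(x,y),\dots,P_m(x,y))$. Let $\mathrm{e}_x$ be the standard basis vector. Let $\alpha_{i,x}=\|P_i\mathrm{e}_x\|$ (the cosine of the angle between $\mathrm{e}_x$ and $E_i$), and let $\alpha_{i,xy}$ be the cosine of the angle between $P_i\mathrm{e}_x$ and $P_i\mathrm{e}_y$, with $\alpha_{i,xy}=0$ if $P_i\mathrm{e}_x=0$ or $P_i\mathrm{e}_y=0$. Define $\alpha_i(x,x)=\alpha_{i,x}$, $\alpha_i(x,y)=\alpha_{i,xy}$ for $x\neq y$, and $\alpha_*(x,y)=(\alpha_1(x,y),\dots,\alpha_m(x,y))$. General framework: for a pair coloring $\chi$ (a map assigning to each graph $G$ and each $(x,y)\in V(G)^2$ a value $\chi(x,y)$, invariant under isomorphisms) define vertex colorings $\chi_0(x)=\chi(x,x)$, $\chi_{r+1}(x)=\big(\chi_r(x),\{\!\{(\chi(x,y),\chi_r(y))\}\!\}_{y\in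 V(G)}\big)$ for integers $r\ge0$, and $\chi_{1/2}(x)=\big(\chi(x,x),\{\!\{\chi(x,y)\}\!\}_{y\in V(G)}\big)$, where $\{\!\{\cdot\}\!\}$ denotes a multiset. The graph invariant $\chi^{(r)}$ is $\chi^{(r)}(G)=\{\!\{\chi_r(x)\}\!\}_{x\in V(G)}$. Two invariants $\mathcal I,\mathcal I'$ are equivalent if each determines the other, i.e. $\mathcal I(G)=\mathcal I(H)\iff \mathcal I'(G)=\mathcal I'(H)$ for all graphs $G,H$. *)

theory Defs
  imports Complex_Main "HOL-Library.Multiset"
begin

definition verts :: "nat \<Rightarrow> nat set" where
  "verts n = {1..n}"

definition graph :: "nat \<Rightarrow> (nat \<Rightarrow> nat \<Rightarrow> bool) \<Rightarrow> bool" where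
  "graph n E \<longleftrightarrow> (\<forall>x y. E x y \<longrightarrow> x \<in> verts n \<and> y \<in> verts n)
                  \<and> (\<forall>x y. E x y \<longrightarrow> E y x) \<and> (\<forall>x. \<not> E x x)"

definition adj :: "nat \<Rightarrow> (nat \<Rightarrow> nat \<Rightarrow> bool) \<Rightarrow> nat \<Rightarrow> nat \<Rightarrow> real" where
  "adj n E x y = (if x \<in> verts n \<and> y \<in> verts n \<and> E x y then 1 else 0)"

definition vecs :: "nat \<Rightarrow> (nat \<Rightarrow> real) set" where
  "vecs n = {v. \<forall>x. x \<notin> verts n \<longrightarrow> v x = 0}"

definition mulv :: "nat \<Rightarrow> (nat \<Rightarrow> nat \<Rightarrow> real) \<Rightarrow> (nat \<Rightarrow> real) \<Rightarrow> nat \<Rightarrow> real" where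
  "mulv n A v = (\<lambda>x. if x \<in> verts n then (\<Sum>y\<in>verts n. A x y * v y) else 0)"

definition inner_n :: "nat \<Rightarrow> (nat \<Rightarrow> real) \<Rightarrow> (nat \<Rightarrow> real) \<Rightarrow> real" where
  "inner_n n u v = (\<Sum>x\<in>verts n. u x * v x)"

definition norm_n :: "nat \<Rightarrow> (nat \<Rightarrow> real) \<Rightarrow> real" where
  "norm_n n v = sqrt (inner_n n v v)"

definition unitv :: "nat \<Rightarrow> nat \<Rightarrow> real" where
  "unitv x = (\<lambda>y. if y = x then 1 else 0)"

definition proj :: "nat \<Rightarrow> (nat \<Rightarrow> real) set \<Rightarrow> (nat \<Rightarrow> real) \<Rightarrow> (nat \<Rightarrow> real)" where
  "proj n S v = (THE w. w \<in> S \<and> (\<forall>u\<in>S. inner_n n (\<lambda>x. v x - w x) u = 0))"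

definition eigenspace :: "nat \<Rightarrow> (nat \<Rightarrow> nat \<Rightarrow> bool) \<Rightarrow> real \<Rightarrow> (nat \<Rightarrow> real) set" where
  "eigenspace n E \<mu> = {v \<in> vecs n. mulv n (adj n E) v = (\<lambda>x. \<mu> * v x)}"

definition eigenvalues :: "nat \<Rightarrow> (nat \<Rightarrow> nat \<Rightarrow> bool) \<Rightarrow> real set" where
  "eigenvalues n E = {\<mu>. \<exists>v\<in>eigenspace n E \<mu>. v \<noteq> (\<lambda>_. 0)}"

definition eigs :: "nat \<Rightarrow> (nat \<Rightarrow> nat \<Rightarrow> bool) \<Rightarrow> real list" where
  "eigs n E = sorted_list_of_set (eigenvalues n E)"

definition Pe :: "nat \<Rightarrow> (nat \<Rightarrow> nat \<Rightarrow> bool) \<Rightarrow> real \<Rightarrow> nat \<Rightarrow> (nat \<Rightarrow> real)" where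
  "Pe n E \<mu> x = proj n (eigenspace n E \<mu>) (unitv x)"

definition Pmat :: "nat \<Rightarrow> (nat \<Rightarrow> nat \<Rightarrow> bool) \<Rightarrow> real \<Rightarrow> nat \<Rightarrow> nat \<Rightarrow> real" where
  "Pmat n E \<mu> x y = Pe n E \<mu> y x"

definition Pstar :: "nat \<Rightarrow> (nat \<Rightarrow> nat \<Rightarrow> bool) \<Rightarrow> nat \<Rightarrow> nat \<Rightarrow> real list" where
  "Pstar n E x y = map (\<lambda>\<mu>. Pmat n E \<mu> x y) (eigs n E)"

definition alpha :: "nat \<Rightarrow> (nat \<Rightarrow> nat \<Rightarrow> bool) \<Rightarrow> real \<Rightarrow> nat \<Rightarrow> nat \<Rightarrow> real" where
  "alpha n E \<mu> x y =
     (if x = y then norm_n n (Pe n E \<mu> x)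
      else (let u = Pe n E \<mu> x; w = Pe n E \<mu> y in
            if u = (\<lambda>_. 0) \<or> w = (\<lambda>_. 0) then 0
            else inner_n n u w / (norm_n n u * norm_n n w)))"

definition alphastar :: "nat \<Rightarrow> (nat \<Rightarrow> nat \<Rightarrow> bool) \<Rightarrow> nat \<Rightarrow> nat \<Rightarrow> real list" where
  "alphastar n E x y = map (\<lambda>\<mu>. alpha n E \<mu> x y) (eigs n E)"

datatype 'c colour = Base 'c | Refine "'c colour" "('c \<times> 'c colour) multiset"

fun wl_col :: "nat set \<Rightarrow> (nat \<Rightarrow> nat \<Rightarrow> 'c) \<Rightarrow> nat \<Rightarrow> nat \<Rightarrow> 'c colour" where
  "wl_col V c 0 x = Base (c x x)"
| "wl_col V c (Suc r) x =
     Refine (wl_col V c r x) (image_mset (\<lambda>y. (c x y, wl_col V c r y)) (mset_set V))"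

definition wl_inv :: "nat set \<Rightarrow> (nat \<Rightarrow> nat \<Rightarrow> 'c) \<Rightarrow> nat \<Rightarrow> 'c colour multiset" where
  "wl_inv V c r = image_mset (wl_col V c r) (mset_set V)"

end

theory Submission
  imports Defs "HOL-Analysis.Analysis"
begin

text \<open>Both colourings are computed pairwise from the Gram entries of the projected basis
vectors: \<open>P\<^sub>i(x,y) = \<langle>P\<^sub>i e\<^sub>x, P\<^sub>i e\<^sub>y\<rangle>\<close>, \<open>\<alpha>\<^sub>i(x,x) = \<surd>P\<^sub>i(x,x)\<close> and, for \<open>x \<noteq> y\<close>,
\<open>\<alpha>\<^sub>i(x,y) = P\<^sub>i(x,y) / (\<surd>P\<^sub>i(x,x) \<surd>P\<^sub>i(y,y))\<close>. Hence \<open>\<alpha>\<^sub>*(x,y)\<close> is a function of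
\<open>P\<^sub>*(x,y), P\<^sub>*(x,x), P\<^sub>*(y,y)\<close>, and conversely \<open>P\<^sub>i(x,y) = \<alpha>\<^sub>i(x,y) \<alpha>\<^sub>i(x,x) \<alpha>\<^sub>i(y,y)\<close>,
provided the colour of a pair reveals whether it is diagonal. It does: by the spectral
resolution \<open>\<Sum>\<^sub>i P\<^sub>i = I\<close> the entries of \<open>P\<^sub>*(x,y)\<close> sum to \<open>[x = y]\<close>, and if
\<open>\<alpha>\<^sub>*(x,y) = \<alpha>\<^sub>*(x,x) = \<alpha>\<^sub>*(y,y)\<close> with \<open>x \<noteq> y\<close> then \<open>P\<^sub>i(x,y) = P\<^sub>i(x,x)\<^sup>3\<^sup>/\<^sup>2\<close> for all \<open>i\<close>,
which cannot sum to \<open>0\<close> while the \<open>P\<^sub>i(x,x)\<close> sum to \<open>1\<close>. A pair colouring that is a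
function of the pair colour and the two vertex colours of another one is determined by it
in every round of colour refinement.

The spectral resolution is obtained variationally: the projection onto a closed subspace is the
nearest point, and the maximiser of the Rayleigh quotient on the unit sphere of an invariant
subspace is an eigenvector; both extrema exist by compactness. Hence the orthogonal complement
of all eigenspaces, being invariant, is zero.\<close>

section \<open>Euclidean structure on functions supported on the vertices\<close>

lemma finite_verts [simp]: "finite (verts n)"
  by (simp add: verts_def)

lemma inner_n_commute: "inner_n n u v = inner_n n v u"
  by (simp add: inner_n_def mult.commute)

lemma inner_n_self_nonneg: "inner_n n v v \<ge> 0"
  by (simp add: inner_n_def sum_nonneg)

lemma inner_n_lincomb_left:
  "inner_n n (\<lambda>x. a * u x + b * w x) v = a * inner_n n u v + b * inner_n n w v"
  unfolding inner_n_def by (simp add: distrib_right sum.distrib sum_distrib_left mult.assoc)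

lemma inner_n_diff_left: "inner_n n (\<lambda>x. u x - w x) v = inner_n n u v - inner_n n w v"
  unfolding inner_n_def by (simp add: left_diff_distrib sum_subtractf)

lemma inner_n_scale_left: "inner_n n (\<lambda>x. a * u x) v = a * inner_n n u v"
  unfolding inner_n_def by (simp add: sum_distrib_left mult.assoc)

lemma inner_n_scale_right: "inner_n n u (\<lambda>x. a * v x) = a * inner_n n u v"
  unfolding inner_n_def by (simp add: sum_distrib_left mult.left_commute)

lemma inner_n_sum_left:
  "finite I \<Longrightarrow> inner_n n (\<lambda>y. \<Sum>i\<in>I. f i y) u = (\<Sum>i\<in>I. inner_n n (f i) u)"
  unfolding inner_n_def by (simp only: sum_distrib_right) (rule sum.swap)

lemma inner_n_add_scaled:
  "inner_n n (\<lambda>x. d x + t * u x) (\<lambda>x. e x + t * w x)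
   = inner_n n d e + t * (inner_n n d w + inner_n n u e) + t\<^sup>2 * inner_n n u w"
proof -
  have "(d x + t * u x) * (e x + t * w x)
      = d x * e x + t * (d x * w x) + t * (u x * e x) + t\<^sup>2 * (u x * w x)" for x
    by (simp add: algebra_simps power2_eq_square)
  then show ?thesis
    unfolding inner_n_def by (simp add: sum.distrib sum_distrib_left distrib_left)
qed

lemma inner_n_self_eq_0_iff: "v \<in> vecs n \<Longrightarrow> inner_n n v v = 0 \<longleftrightarrow> v = (\<lambda>_. 0)"
  by (auto simp: inner_n_def vecs_def sum_nonneg_eq_0_iff fun_eq_iff)

lemma inner_n_self_pos: "v \<in> vecs n \<Longrightarrow> v \<noteq> (\<lambda>_. 0) \<Longrightarrow> inner_n n v v > 0"
  using inner_n_self_nonneg[of n v] inner_n_self_eq_0_iff[of v n] by linarith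

lemma inner_n_normalize:
  assumes "a > 0"
  shows "inner_n n (\<lambda>x. (1 / sqrt a) * z x) (\<lambda>x. (1 / sqrt a) * z x) = inner_n n z z / a"
proof -
  have "sqrt a * sqrt a = a" using assms by simp
  then have "(1 / sqrt a) * (1 / sqrt a) = 1 / a" by (metis divide_divide_eq_left' times_divide_eq_right mult_1_right)
  then show ?thesis
    unfolding inner_n_scale_left inner_n_scale_right mult.assoc[symmetric] by simp
qed

lemma abs_coord_le_sqrt_inner_n:
  assumes "v \<in> vecs n"
  shows "\<bar>v x\<bar> \<le> sqrt (inner_n n v v)"
proof -
  have "(v x)\<^sup>2 \<le> inner_n n v v"
  proof (cases "x \<in> verts n")
    case True
    then have "(v x)\<^sup>2 = (\<Sum>y\<in>{x}. v y * v y)" by (simp add: power2_eq_square)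
    also have "\<dots> \<le> inner_n n v v"
      unfolding inner_n_def by (rule sum_mono2) (use True in auto)
    finally show ?thesis .
  qed (use assms inner_n_self_nonneg[of n v] in \<open>auto simp: vecs_def\<close>)
  then show ?thesis by (simp add: real_le_rsqrt)
qed

lemma unitv_in_vecs: "x \<in> verts n \<Longrightarrow> unitv x \<in> vecs n"
  by (auto simp: unitv_def vecs_def)

lemma inner_n_unitv_left:
  assumes "x \<in> verts n"
  shows "inner_n n (unitv x) w = w x"
proof -
  have "inner_n n (unitv x) w = (\<Sum>y\<in>verts n. if y = x then w y else 0)"
    unfolding inner_n_def unitv_def by (rule sum.cong) auto
  then show ?thesis using assms by simp
qed

lemma mulv_in_vecs: "mulv n A v \<in> vecs n"
  by (simp add: mulv_def vecs_def)

lemma mulv_lincomb: "mulv n A (\<lambda>x. a x + t * b x) = (\<lambda>x. mulv n A a x + t * mulv n A b x)"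
  by (auto simp: mulv_def distrib_left sum.distrib sum_distrib_left mult.left_commute)

lemma mulv_scale: "mulv n A (\<lambda>x. t * b x) = (\<lambda>x. t * mulv n A b x)"
  by (auto simp: mulv_def sum_distrib_left mult.left_commute)

lemma inner_n_mulv_commute:
  assumes "\<And>x y. A x y = A y x"
  shows "inner_n n (mulv n A u) v = inner_n n u (mulv n A v)"
proof -
  have "inner_n n (mulv n A u) v = (\<Sum>x\<in>verts n. \<Sum>y\<in>verts n. A x y * u y * v x)"
    unfolding inner_n_def mulv_def by (intro sum.cong refl) (auto simp: sum_distrib_right)
  also have "\<dots> = (\<Sum>y\<in>verts n. \<Sum>x\<in>verts n. A x y * u y * v x)"
    by (rule sum.swap)
  also have "\<dots> = inner_n n u (mulv n A v)"
    unfolding inner_n_def mulv_def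
    by (intro sum.cong refl) (auto simp: sum_distrib_left assms[of _ y for y] mult_ac)
  finally show ?thesis .
qed

lemma continuous_on_coordinate [continuous_intros]:
  "continuous_on S (\<lambda>w::nat \<Rightarrow> real. w i)"
  by (rule continuous_on_subset[OF continuous_on_product_coordinates]) simp

lemma continuous_on_inner_n [continuous_intros]:
  assumes "continuous_on S f" "continuous_on S g"
  shows "continuous_on S (\<lambda>w. inner_n n (f w) (g w))"
  using continuous_on_product_then_coordinatewise[OF assms(1)]
    continuous_on_product_then_coordinatewise[OF assms(2)]
  unfolding inner_n_def by (intro continuous_intros) auto

lemma continuous_on_mulv_coordinate [continuous_intros]:
  "continuous_on S (\<lambda>v. mulv n A v x)"
proof (cases "x \<in> verts n")
  case True
  then have "(\<lambda>v. mulv n A v x) = (\<lambda>v. \<Sum>y\<in>verts n. A x y * v y)" by (simp add: mulv_def)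
  then show ?thesis by (simp only:) (intro continuous_intros)
next
  case False
  then have "(\<lambda>v. mulv n A v x) = (\<lambda>v. 0)" by (simp add: mulv_def)
  then show ?thesis by (simp only: continuous_on_const)
qed

lemma closed_vecs: "closed (vecs n)"
  unfolding vecs_def
  by (intro closed_Collect_all closed_Collect_imp closed_Collect_eq continuous_intros) auto

definition coord_box :: "nat \<Rightarrow> real \<Rightarrow> (nat \<Rightarrow> real) set" where
  "coord_box n R = {w. \<forall>x. w x \<in> (if x \<in> verts n then {-R..R} else {0})}"

lemma compact_coord_box: "compact (coord_box n R)"
proof -
  have "coord_box n R = PiE UNIV (\<lambda>x. if x \<in> verts n then {-R..R} else {0})"
    by (auto simp: PiE_def Pi_def coord_box_def)
  moreover have "compactin (product_topology (\<lambda>_. euclidean) UNIV)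
      (PiE UNIV (\<lambda>x::nat. if x \<in> verts n then {-R..R} else ({0}::real set)))"
    by (subst compactin_PiE) auto
  ultimately show ?thesis by (simp add: euclidean_product_topology)
qed

lemma coord_boxI:
  assumes "v \<in> vecs n" "\<And>x. x \<in> verts n \<Longrightarrow> \<bar>v x\<bar> \<le> R"
  shows "v \<in> coord_box n R"
  using assms unfolding coord_box_def vecs_def by (auto dest!: assms(2) simp: abs_le_iff)

lemma linear_coeff_eq_0_if_quadratic_nonneg:
  fixes a b :: real
  assumes "\<And>t. 0 \<le> t * a + t\<^sup>2 * b"
  shows "a = 0"
proof (rule ccontr)
  assume "a \<noteq> 0"
  then have a2: "a\<^sup>2 > 0" by simp
  show False
  proof (cases "b \<le> 0")
    case True
    have "(-a) * a + (-a)\<^sup>2 * b = -(a\<^sup>2) + a\<^sup>2 * b" by (simp add: power2_eq_square)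
    also have "\<dots> < 0" using True a2 by (smt (verit) mult_nonneg_nonpos)
    finally show False using assms[of "-a"] by simp
  next
    case False
    have "(-a/(2*b)) * a + (-a/(2*b))\<^sup>2 * b = -(a\<^sup>2) / (4*b)"
      using False by (simp add: field_simps power2_eq_square)
    also have "\<dots> < 0" using False a2 by simp
    finally show False using assms[of "-a/(2*b)"] by simp
  qed
qed

section \<open>Nearest points and Rayleigh quotients\<close>

definition closed_subspace_n :: "nat \<Rightarrow> (nat \<Rightarrow> real) set \<Rightarrow> bool" where
  "closed_subspace_n n S \<longleftrightarrow> S \<subseteq> vecs n \<and> closed S \<and> (\<lambda>_. 0) \<in> S
     \<and> (\<forall>u\<in>S. \<forall>w\<in>S. \<forall>t. (\<lambda>x. u x + t * w x) \<in> S)"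

lemma closed_subspace_nD:
  assumes "closed_subspace_n n S"
  shows "S \<subseteq> vecs n" "closed S" "(\<lambda>_. 0) \<in> S"
    "\<And>u w t. u \<in> S \<Longrightarrow> w \<in> S \<Longrightarrow> (\<lambda>x. u x + t * w x) \<in> S"
    "\<And>u t. u \<in> S \<Longrightarrow> (\<lambda>x. t * u x) \<in> S"
proof -
  show "S \<subseteq> vecs n" "closed S" "(\<lambda>_. 0) \<in> S"
    and lin: "\<And>u w t. u \<in> S \<Longrightarrow> w \<in> S \<Longrightarrow> (\<lambda>x. u x + t * w x) \<in> S"
    using assms unfolding closed_subspace_n_def by blast+
  show "(\<lambda>x. t * u x) \<in> S" if "u \<in> S" for u t
    using lin[OF \<open>(\<lambda>_. 0) \<in> S\<close> that, of t] by simp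
qed

lemma closed_subspace_n_nearest_point_exists:
  assumes S: "closed_subspace_n n S" and v: "v \<in> vecs n"
  shows "\<exists>w0\<in>S. \<forall>w\<in>S. inner_n n (\<lambda>x. v x - w0 x) (\<lambda>x. v x - w0 x)
                         \<le> inner_n n (\<lambda>x. v x - w x) (\<lambda>x. v x - w x)"
proof -
  define g where "g w = inner_n n (\<lambda>x. v x - w x) (\<lambda>x. v x - w x)" for w
  define R where "R = 2 * sqrt (inner_n n v v)"
  define K where "K = coord_box n R \<inter> S"
  have Kc: "compact K"
    unfolding K_def using compact_coord_box closed_subspace_nD(2)[OF S] by blast
  have K0: "(\<lambda>_. 0) \<in> K"
  proof -
    have "R \<ge> 0" unfolding R_def using inner_n_self_nonneg[of n v] by simp
    then have "(\<lambda>_. 0) \<in> coord_box n R" by (intro coord_boxI) (auto simp: vecs_def)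
    then show ?thesis unfolding K_def using closed_subspace_nD(3)[OF S] by blast
  qed
  have gc: "continuous_on K g" unfolding g_def by (intro continuous_intros)
  obtain w0 where w0K: "w0 \<in> K" and w0min: "\<And>w. w \<in> K \<Longrightarrow> g w0 \<le> g w"
    using continuous_attains_inf[OF Kc _ gc] K0 by blast
  \<comment> \<open>Outside the box \<open>g\<close> exceeds \<open>g 0\<close>, so \<open>w0\<close> minimises \<open>g\<close> on all of \<open>S\<close>.\<close>
  have "g w0 \<le> g w" if wS: "w \<in> S" for w
  proof (cases "g w \<le> inner_n n v v")
    case True
    have wv: "w \<in> vecs n" using wS closed_subspace_nD(1)[OF S] by auto
    have dv: "(\<lambda>x. v x - w x) \<in> vecs n" using wv v by (auto simp: vecs_def)
    have "w \<in> coord_box n R"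
    proof (rule coord_boxI[OF wv])
      fix x
      have "\<bar>w x\<bar> \<le> \<bar>v x\<bar> + \<bar>v x - w x\<bar>" by linarith
      also have "\<dots> \<le> sqrt (inner_n n v v) + sqrt (g w)"
        using abs_coord_le_sqrt_inner_n[OF v, of x] abs_coord_le_sqrt_inner_n[OF dv, of x]
        unfolding g_def by simp
      also have "\<dots> \<le> R" unfolding R_def using True by simp
      finally show "\<bar>w x\<bar> \<le> R" .
    qed
    then show ?thesis using w0min wS K_def by blast
  next
    case False
    then show ?thesis using w0min[OF K0] by (simp add: g_def)
  qed
  moreover have "w0 \<in> S" using w0K K_def by auto
  ultimately show ?thesis unfolding g_def by blast
qed

lemma closed_subspace_n_orthogonal_proj_exists:
  assumes S: "closed_subspace_n n S" and v: "v \<in> vecs n"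
  shows "\<exists>w\<in>S. \<forall>u\<in>S. inner_n n (\<lambda>x. v x - w x) u = 0"
proof -
  define g where "g w = inner_n n (\<lambda>x. v x - w x) (\<lambda>x. v x - w x)" for w
  obtain w0 where w0S: "w0 \<in> S" and gmin: "\<And>w. w \<in> S \<Longrightarrow> g w0 \<le> g w"
    using closed_subspace_n_nearest_point_exists[OF S v] unfolding g_def by blast
  show ?thesis
  proof (intro bexI[OF _ w0S] ballI)
    fix u assume uS: "u \<in> S"
    have "0 \<le> t * (- 2 * inner_n n (\<lambda>x. v x - w0 x) u) + t\<^sup>2 * inner_n n u u" for t
    proof -
      have shift: "(\<lambda>x. v x - (w0 x + t * u x)) = (\<lambda>x. (v x - w0 x) + t * (- u x))"
        by (simp add: algebra_simps)
      have "inner_n n (\<lambda>x. - u x) (\<lambda>x. - u x) = inner_n n u u"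
        "inner_n n (\<lambda>x. v x - w0 x) (\<lambda>x. - u x) = - inner_n n (\<lambda>x. v x - w0 x) u"
        "inner_n n (\<lambda>x. - u x) (\<lambda>x. v x - w0 x) = - inner_n n (\<lambda>x. v x - w0 x) u"
        by (simp_all add: inner_n_def sum_negf mult.commute)
      then have "g (\<lambda>x. w0 x + t * u x)
          = g w0 + t * (- 2 * inner_n n (\<lambda>x. v x - w0 x) u) + t\<^sup>2 * inner_n n u u"
        unfolding g_def shift inner_n_add_scaled by simp
      moreover have "g w0 \<le> g (\<lambda>x. w0 x + t * u x)"
        by (rule gmin[OF closed_subspace_nD(4)[OF S w0S uS]])
      ultimately show ?thesis by simp
    qed
    from linear_coeff_eq_0_if_quadratic_nonneg[OF this]
    show "inner_n n (\<lambda>x. v x - w0 x) u = 0" by simp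
  qed
qed

lemma rayleigh_quotient_maximum_exists:
  assumes W: "closed_subspace_n n W" and w: "w \<in> W" "w \<noteq> (\<lambda>_. 0)"
  shows "\<exists>v0\<in>W. inner_n n v0 v0 = 1 \<and>
           (\<forall>z\<in>W. inner_n n (mulv n A z) z \<le> inner_n n (mulv n A v0) v0 * inner_n n z z)"
proof -
  note Wv = closed_subspace_nD(1)[OF W] and Ws = closed_subspace_nD(5)[OF W]
  define q where "q v = inner_n n (mulv n A v) v" for v
  have normalize: "(\<lambda>x. (1 / sqrt (inner_n n z z)) * z x) \<in> W
      \<and> inner_n n (\<lambda>x. (1 / sqrt (inner_n n z z)) * z x) (\<lambda>x. (1 / sqrt (inner_n n z z)) * z x) = 1"
    if "z \<in> W" "z \<noteq> (\<lambda>_. 0)" for z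
  proof (rule conjI[OF Ws[OF that(1)]])
    have "inner_n n z z > 0" using inner_n_self_pos that Wv by blast
    then show "inner_n n (\<lambda>x. (1 / sqrt (inner_n n z z)) * z x) (\<lambda>x. (1 / sqrt (inner_n n z z)) * z x) = 1"
      using inner_n_normalize[of "inner_n n z z" n z] by simp
  qed
  define K where "K = coord_box n 1 \<inter> (W \<inter> {v. inner_n n v v = 1})"
  have inK: "v \<in> K \<longleftrightarrow> v \<in> W \<and> inner_n n v v = 1" for v
  proof -
    have "v \<in> coord_box n 1" if "v \<in> W" "inner_n n v v = 1"
      using that Wv abs_coord_le_sqrt_inner_n[of v n] by (intro coord_boxI) auto
    then show ?thesis unfolding K_def by blast
  qed
  have Kc: "compact K" unfolding K_def
    by (intro compact_Int_closed compact_coord_box closed_Int closed_subspace_nD(2)[OF W]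
        closed_Collect_eq continuous_intros)
  have Kne: "K \<noteq> {}" using normalize[OF w] inK by blast
  have qc: "continuous_on K q" unfolding q_def by (intro continuous_intros)
  obtain v0 where v0K: "v0 \<in> K" and v0max: "\<And>v. v \<in> K \<Longrightarrow> q v \<le> q v0"
    using continuous_attains_sup[OF Kc Kne qc] by blast
  have "q z \<le> q v0 * inner_n n z z" if zW: "z \<in> W" for z
  proof (cases "z = (\<lambda>_. 0)")
    case True then show ?thesis by (simp add: q_def mulv_def inner_n_def)
  next
    case False
    have zz: "inner_n n z z > 0" using inner_n_self_pos False zW Wv by blast
    define d where "d = 1 / sqrt (inner_n n z z)"
    have "q (\<lambda>x. d * z x) \<le> q v0" using v0max normalize[OF zW False] inK unfolding d_def by blast
    moreover have "q (\<lambda>x. d * z x) = d\<^sup>2 * q z"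
      unfolding q_def mulv_scale
      by (simp add: inner_n_scale_left inner_n_scale_right power2_eq_square)
    moreover have "d\<^sup>2 = 1 / inner_n n z z" using zz by (simp add: d_def power_divide)
    ultimately show ?thesis using zz by (simp add: divide_le_eq mult.commute)
  qed
  then show ?thesis using v0K inK unfolding q_def by blast
qed

lemma rayleigh_quotient_maximiser_is_eigenvector:
  assumes A: "\<And>x y. A x y = A y x" and W: "closed_subspace_n n W"
    and Winv: "\<And>u. u \<in> W \<Longrightarrow> mulv n A u \<in> W"
    and v0W: "v0 \<in> W" and v01: "inner_n n v0 v0 = 1"
    and max: "\<And>z. z \<in> W \<Longrightarrow> inner_n n (mulv n A z) z \<le> inner_n n (mulv n A v0) v0 * inner_n n z z"
  shows "mulv n A v0 = (\<lambda>x. inner_n n (mulv n A v0) v0 * v0 x)"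
proof -
  define lam where "lam = inner_n n (mulv n A v0) v0"
  \<comment> \<open>First variation of \<open>\<langle>A z, z\<rangle> - lam \<langle>z, z\<rangle> \<le> 0\<close> at \<open>z = v0\<close>, where it vanishes.\<close>
  have key: "inner_n n (mulv n A v0) u = lam * inner_n n v0 u" if uW: "u \<in> W" for u
  proof -
    have "0 \<le> t * (2 * lam * inner_n n v0 u - 2 * inner_n n (mulv n A v0) u)
              + t\<^sup>2 * (lam * inner_n n u u - inner_n n (mulv n A u) u)" for t
    proof -
      have "inner_n n (mulv n A (\<lambda>x. v0 x + t * u x)) (\<lambda>x. v0 x + t * u x)
          = lam + t * (2 * inner_n n (mulv n A v0) u) + t\<^sup>2 * inner_n n (mulv n A u) u"
        unfolding mulv_lincomb inner_n_add_scaled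
        using inner_n_mulv_commute[of A n u v0, OF A] inner_n_commute[of n u]
        by (simp add: lam_def)
      moreover have "inner_n n (\<lambda>x. v0 x + t * u x) (\<lambda>x. v0 x + t * u x)
          = 1 + t * (2 * inner_n n v0 u) + t\<^sup>2 * inner_n n u u"
        unfolding inner_n_add_scaled using v01 inner_n_commute[of n u v0] by simp
      ultimately show ?thesis
        using max[OF closed_subspace_nD(4)[OF W v0W uW, of t]] unfolding lam_def[symmetric]
        by (simp add: algebra_simps)
    qed
    from linear_coeff_eq_0_if_quadratic_nonneg[OF this] show ?thesis by simp
  qed
  define r where "r = (\<lambda>x. mulv n A v0 x + (- lam) * v0 x)"
  have rW: "r \<in> W" unfolding r_def using closed_subspace_nD(4)[OF W Winv[OF v0W] v0W] .
  have "inner_n n r r = inner_n n (mulv n A v0) r - lam * inner_n n v0 r"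
    unfolding r_def using inner_n_lincomb_left[of n 1 "mulv n A v0" "-lam" v0 r]
    by (simp add: r_def)
  also have "\<dots> = 0" using key[OF rW] by simp
  finally have "r = (\<lambda>_. 0)" using inner_n_self_eq_0_iff rW closed_subspace_nD(1)[OF W] by blast
  then show ?thesis unfolding r_def lam_def[symmetric] by (auto simp: fun_eq_iff)
qed

lemma invariant_subspace_has_eigenvector:
  assumes "\<And>x y. A x y = A y x" and W: "closed_subspace_n n W"
    and "\<And>u. u \<in> W \<Longrightarrow> mulv n A u \<in> W"
    and "w \<in> W" "w \<noteq> (\<lambda>_. 0)"
  shows "\<exists>v\<in>W. \<exists>l. v \<noteq> (\<lambda>_. 0) \<and> mulv n A v = (\<lambda>x. l * v x)"
proof -
  obtain v0 where "v0 \<in> W" "inner_n n v0 v0 = 1"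
    and "\<forall>z\<in>W. inner_n n (mulv n A z) z \<le> inner_n n (mulv n A v0) v0 * inner_n n z z"
    using rayleigh_quotient_maximum_exists[OF W assms(4,5)] by blast
  moreover from this have "v0 \<noteq> (\<lambda>_. 0)" by (auto simp: inner_n_def)
  ultimately show ?thesis
    using rayleigh_quotient_maximiser_is_eigenvector[OF assms(1-3)] by blast
qed

lemma proj_closed_subspace_n:
  assumes S: "closed_subspace_n n S" and v: "v \<in> vecs n"
  shows "proj n S v \<in> S" "\<And>u. u \<in> S \<Longrightarrow> inner_n n (\<lambda>x. v x - proj n S v x) u = 0"
proof -
  obtain w where w: "w \<in> S" "\<forall>u\<in>S. inner_n n (\<lambda>x. v x - w x) u = 0"
    using closed_subspace_n_orthogonal_proj_exists[OF S v] by blast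
  have uniq: "w' = w" if w': "w' \<in> S" "\<forall>u\<in>S. inner_n n (\<lambda>x. v x - w' x) u = 0" for w'
  proof -
    define d where "d = (\<lambda>x. w' x + (-1) * w x)"
    have dS: "d \<in> S" unfolding d_def by (rule closed_subspace_nD(4)[OF S w'(1) w(1)])
    have "d = (\<lambda>x. (v x - w x) - (v x - w' x))" unfolding d_def by simp
    then have "inner_n n d d = inner_n n (\<lambda>x. v x - w x) d - inner_n n (\<lambda>x. v x - w' x) d"
      by (metis (no_types) inner_n_diff_left)
    also have "\<dots> = 0" using w(2) w'(2) dS by simp
    finally have "d = (\<lambda>_. 0)"
      using inner_n_self_eq_0_iff dS closed_subspace_nD(1)[OF S] by blast
    then show ?thesis unfolding d_def by (auto simp: fun_eq_iff)
  qed
  have "proj n S v = w"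
    unfolding proj_def
  proof (rule the_equality)
    show "w \<in> S \<and> (\<forall>u\<in>S. inner_n n (\<lambda>x. v x - w x) u = 0)" using w by blast
  qed (use uniq in blast)
  then show "proj n S v \<in> S" "\<And>u. u \<in> S \<Longrightarrow> inner_n n (\<lambda>x. v x - proj n S v x) u = 0"
    using w by simp_all
qed

lemma closed_subspace_n_orthogonal_complement:
  "closed_subspace_n n {v \<in> vecs n. \<forall>u\<in>U. inner_n n v u = 0}"
proof -
  have "{v \<in> vecs n. \<forall>u\<in>U. inner_n n v u = 0}
      = vecs n \<inter> (\<Inter>u\<in>U. {v. inner_n n v u = 0})"
    by blast
  moreover have "closed (\<Inter>u\<in>U. {v. inner_n n v u = 0})"
    by (intro closed_INT ballI closed_Collect_eq continuous_intros)
  moreover have "inner_n n (\<lambda>x. a x + t * b x) u = 0"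
    if "inner_n n a u = 0" "inner_n n b u = 0" for a b t u
    using inner_n_lincomb_left[of n 1 a t b u] that by simp
  ultimately show ?thesis
    unfolding closed_subspace_n_def using closed_vecs
    by (auto simp: vecs_def inner_n_def)
qed

section \<open>Spectral resolution of the adjacency matrix\<close>

lemma adj_commute: "graph n E \<Longrightarrow> adj n E x y = adj n E y x"
  by (auto simp: adj_def graph_def)

lemma eigenspace_subset_vecs: "eigenspace n E \<mu> \<subseteq> vecs n"
  by (auto simp: eigenspace_def)

lemma eigenspace_eq_mulv: "v \<in> eigenspace n E \<mu> \<Longrightarrow> mulv n (adj n E) v = (\<lambda>x. \<mu> * v x)"
  by (simp add: eigenspace_def)

lemma closed_subspace_n_eigenspace: "closed_subspace_n n (eigenspace n E \<mu>)"
  unfolding closed_subspace_n_def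
proof (intro conjI ballI allI)
  show "eigenspace n E \<mu> \<subseteq> vecs n" by (rule eigenspace_subset_vecs)
  have "eigenspace n E \<mu> = vecs n \<inter> {v. \<forall>x. mulv n (adj n E) v x = \<mu> * v x}"
    by (auto simp: eigenspace_def fun_eq_iff)
  also have "closed \<dots>"
    by (intro closed_Int closed_vecs closed_Collect_all closed_Collect_eq continuous_intros)
  finally show "closed (eigenspace n E \<mu>)" .
  show "(\<lambda>_. 0) \<in> eigenspace n E \<mu>"
    by (auto simp: eigenspace_def vecs_def mulv_def)
  show "(\<lambda>x. u x + t * w x) \<in> eigenspace n E \<mu>"
    if "u \<in> eigenspace n E \<mu>" "w \<in> eigenspace n E \<mu>" for u w t
  proof -
    have "mulv n (adj n E) (\<lambda>x. u x + t * w x) = (\<lambda>x. \<mu> * (u x + t * w x))"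
      unfolding mulv_lincomb eigenspace_eq_mulv[OF that(1)] eigenspace_eq_mulv[OF that(2)]
      by (simp add: algebra_simps)
    then show ?thesis using that by (auto simp: eigenspace_def vecs_def)
  qed
qed

lemma eigenspace_orthogonal:
  assumes "graph n E" "u \<in> eigenspace n E \<mu>" "w \<in> eigenspace n E \<nu>" "\<mu> \<noteq> \<nu>"
  shows "inner_n n u w = 0"
proof -
  have "\<mu> * inner_n n u w = inner_n n (mulv n (adj n E) u) w"
    using eigenspace_eq_mulv[OF assms(2)] by (simp add: inner_n_scale_left)
  also have "\<dots> = inner_n n u (mulv n (adj n E) w)"
    by (rule inner_n_mulv_commute[of "adj n E", OF adj_commute[OF assms(1)]])
  also have "\<dots> = \<nu> * inner_n n u w"
    using eigenspace_eq_mulv[OF assms(3)] by (simp add: inner_n_scale_right)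
  finally show ?thesis using assms(4) by auto
qed

lemma orthonormal_sum_coord_sq_le_1:
  assumes F: "finite F" and F1: "\<And>u. u \<in> F \<Longrightarrow> inner_n n u u = 1"
    and F0: "\<And>u w. u \<in> F \<Longrightarrow> w \<in> F \<Longrightarrow> u \<noteq> w \<Longrightarrow> inner_n n u w = 0"
    and x: "x \<in> verts n"
  shows "(\<Sum>u\<in>F. u x * u x) \<le> 1"
proof -
  \<comment> \<open>Bessel's inequality for \<open>e\<^sub>x\<close>, whose projection onto \<open>span F\<close> is \<open>g\<close>.\<close>
  define g where "g y = (\<Sum>u\<in>F. u x * u y)" for y
  have expand: "inner_n n g v = (\<Sum>u\<in>F. u x * inner_n n u v)" for v
    unfolding g_def inner_n_sum_left[OF F] inner_n_scale_left ..
  have gu: "inner_n n u g = u x" if u: "u \<in> F" for u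
  proof -
    have "inner_n n g u = (\<Sum>w\<in>F. if w = u then u x else 0)"
      unfolding expand by (rule sum.cong) (use F0 F1 u in auto)
    then show ?thesis using F u by (simp add: inner_n_commute)
  qed
  have gg: "inner_n n g g = (\<Sum>u\<in>F. u x * u x)"
    unfolding expand by (rule sum.cong) (simp_all add: gu)
  have "0 \<le> inner_n n (\<lambda>y. unitv x y + (-1) * g y) (\<lambda>y. unitv x y + (-1) * g y)"
    by (rule inner_n_self_nonneg)
  also have "\<dots> = 1 - (\<Sum>u\<in>F. u x * u x)"
    unfolding inner_n_add_scaled inner_n_commute[of n g "unitv x"] gg inner_n_unitv_left[OF x]
    by (simp add: g_def unitv_def)
  finally show ?thesis by simp
qed

lemma card_orthonormal_le:
  assumes F: "finite F" and F1: "\<And>u. u \<in> F \<Longrightarrow> inner_n n u u = 1"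
    and F0: "\<And>u w. u \<in> F \<Longrightarrow> w \<in> F \<Longrightarrow> u \<noteq> w \<Longrightarrow> inner_n n u w = 0"
  shows "card F \<le> n"
proof -
  have "card F = (\<Sum>u\<in>F. inner_n n u u)" using F1 by simp
  also have "\<dots> = (\<Sum>x\<in>verts n. \<Sum>u\<in>F. u x * u x)"
    unfolding inner_n_def by (rule sum.swap)
  also have "\<dots> \<le> (\<Sum>x\<in>verts n. 1)"
    by (rule sum_mono) (rule orthonormal_sum_coord_sq_le_1[OF F F1 F0])
  also have "\<dots> = n" by (simp add: verts_def)
  finally show ?thesis by simp
qed

lemma eigenvalue_has_unit_eigenvector:
  assumes "\<mu> \<in> eigenvalues n E"
  shows "\<exists>v\<in>eigenspace n E \<mu>. inner_n n v v = 1"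
proof -
  obtain w where w: "w \<in> eigenspace n E \<mu>" "w \<noteq> (\<lambda>_. 0)"
    using assms by (auto simp: eigenvalues_def)
  have ww: "inner_n n w w > 0"
    using inner_n_self_pos w eigenspace_subset_vecs by blast
  have "(\<lambda>x. (1 / sqrt (inner_n n w w)) * w x) \<in> eigenspace n E \<mu>"
    by (rule closed_subspace_nD(5)[OF closed_subspace_n_eigenspace w(1)])
  moreover have "inner_n n (\<lambda>x. (1 / sqrt (inner_n n w w)) * w x)
      (\<lambda>x. (1 / sqrt (inner_n n w w)) * w x) = 1"
    using inner_n_normalize[OF ww, of n w] ww by simp
  ultimately show ?thesis by blast
qed

lemma finite_eigenvalues:
  assumes G: "graph n E"
  shows "finite (eigenvalues n E)"
proof (rule ccontr)
  assume "infinite (eigenvalues n E)"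
  then obtain M where M: "M \<subseteq> eigenvalues n E" "finite M" "card M = Suc n"
    using infinite_arbitrarily_large by blast
  have "\<forall>\<mu>\<in>M. \<exists>v. v \<in> eigenspace n E \<mu> \<and> inner_n n v v = 1"
    using eigenvalue_has_unit_eigenvector M(1) by blast
  then obtain f where f: "\<And>\<mu>. \<mu> \<in> M \<Longrightarrow> f \<mu> \<in> eigenspace n E \<mu> \<and> inner_n n (f \<mu>) (f \<mu>) = 1"
    by (auto dest!: bchoice)
  have orth: "inner_n n (f \<mu>) (f \<nu>) = 0" if "\<mu> \<in> M" "\<nu> \<in> M" "\<mu> \<noteq> \<nu>" for \<mu> \<nu>
    using eigenspace_orthogonal[OF G] f that by blast
  have inj: "inj_on f M"
  proof (rule inj_onI)
    fix \<mu> \<nu> assume "\<mu> \<in> M" "\<nu> \<in> M" "f \<mu> = f \<nu>"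
    then show "\<mu> = \<nu>" using orth[of \<mu> \<nu>] f[of \<mu>] by fastforce
  qed
  then have "card (f ` M) = Suc n" using card_image[OF inj] M(3) by simp
  moreover have "card (f ` M) \<le> n"
  proof (rule card_orthonormal_le)
    show "finite (f ` M)" using M(2) by simp
    show "\<And>u. u \<in> f ` M \<Longrightarrow> inner_n n u u = 1" using f by blast
    show "\<And>u w. u \<in> f ` M \<Longrightarrow> w \<in> f ` M \<Longrightarrow> u \<noteq> w \<Longrightarrow> inner_n n u w = 0"
      using orth by blast
  qed
  ultimately show False by simp
qed

lemma
  assumes "x \<in> verts n"
  shows Pe_in_eigenspace: "Pe n E \<mu> x \<in> eigenspace n E \<mu>"
    and unitv_minus_Pe_orthogonal:
      "u \<in> eigenspace n E \<mu> \<Longrightarrow> inner_n n (\<lambda>z. unitv x z - Pe n E \<mu> x z) u = 0"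
  using proj_closed_subspace_n[OF closed_subspace_n_eigenspace unitv_in_vecs[OF assms]]
  unfolding Pe_def by blast+

lemma Pe_in_vecs: "x \<in> verts n \<Longrightarrow> Pe n E \<mu> x \<in> vecs n"
  using Pe_in_eigenspace eigenspace_subset_vecs by blast

lemma Pmat_eq_inner_n:
  assumes x: "x \<in> verts n" and y: "y \<in> verts n"
  shows "Pmat n E \<mu> x y = inner_n n (Pe n E \<mu> x) (Pe n E \<mu> y)"
proof -
  have "Pmat n E \<mu> x y = inner_n n (unitv x) (Pe n E \<mu> y)"
    unfolding Pmat_def inner_n_unitv_left[OF x] ..
  also have "\<dots> = inner_n n (Pe n E \<mu> x) (Pe n E \<mu> y)"
    using unitv_minus_Pe_orthogonal[OF x Pe_in_eigenspace[OF y]]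
    unfolding inner_n_diff_left by simp
  finally show ?thesis .
qed

lemma orthogonal_to_eigenspaces_eq_0:
  assumes G: "graph n E" and v: "v \<in> vecs n"
    and orth: "\<And>\<mu> u. u \<in> eigenspace n E \<mu> \<Longrightarrow> inner_n n v u = 0"
  shows "v = (\<lambda>_. 0)"
proof (rule ccontr)
  assume nz: "v \<noteq> (\<lambda>_. 0)"
  define W where "W = {v \<in> vecs n. \<forall>u\<in>(\<Union>\<mu>. eigenspace n E \<mu>). inner_n n v u = 0}"
  have W: "closed_subspace_n n W"
    unfolding W_def by (rule closed_subspace_n_orthogonal_complement)
  have inW: "a \<in> W \<longleftrightarrow> a \<in> vecs n \<and> (\<forall>\<mu>. \<forall>u\<in>eigenspace n E \<mu>. inner_n n a u = 0)" for a
    unfolding W_def by blast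
  have Winv: "mulv n (adj n E) a \<in> W" if a: "a \<in> W" for a
  proof -
    have "inner_n n (mulv n (adj n E) a) u = 0" if u: "u \<in> eigenspace n E \<mu>" for u \<mu>
    proof -
      have "inner_n n (mulv n (adj n E) a) u = inner_n n a (mulv n (adj n E) u)"
        by (rule inner_n_mulv_commute[of "adj n E", OF adj_commute[OF G]])
      also have "\<dots> = \<mu> * inner_n n a u"
        unfolding eigenspace_eq_mulv[OF u] by (rule inner_n_scale_right)
      also have "inner_n n a u = 0" using a u inW by blast
      finally show ?thesis by simp
    qed
    then show ?thesis using inW mulv_in_vecs by blast
  qed
  have "v \<in> W" using v orth inW by blast
  then obtain w l where w: "w \<in> W" "w \<noteq> (\<lambda>_. 0)" "mulv n (adj n E) w = (\<lambda>x. l * w x)"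
    using invariant_subspace_has_eigenvector[OF adj_commute[OF G] W Winv _ nz] by blast
  have wv: "w \<in> vecs n" using w(1) inW by blast
  then have "w \<in> eigenspace n E l" unfolding eigenspace_def using w(3) by blast
  then have "inner_n n w w = 0" using w(1) inW by blast
  then show False using inner_n_self_eq_0_iff[OF wv] w(2) by simp
qed

lemma sum_Pe_eq_unitv:
  assumes G: "graph n E" and x: "x \<in> verts n"
  shows "(\<lambda>y. \<Sum>\<mu>\<in>eigenvalues n E. Pe n E \<mu> x y) = unitv x"
proof -
  let ?L = "eigenvalues n E"
  define z where "z = (\<lambda>y. unitv x y - (\<Sum>\<mu>\<in>?L. Pe n E \<mu> x y))"
  have "z y = 0" if y: "y \<notin> verts n" for y
  proof -
    have "unitv x y = 0" using x y by (auto simp: unitv_def)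
    moreover have "Pe n E \<mu> x y = 0" for \<mu> using Pe_in_vecs[OF x] y by (auto simp: vecs_def)
    ultimately show ?thesis unfolding z_def by simp
  qed
  then have "z \<in> vecs n" by (simp add: vecs_def)
  moreover have "inner_n n z u = 0" if u: "u \<in> eigenspace n E \<nu>" for u \<nu>
  proof (cases "\<nu> \<in> ?L")
    case True
    have "(\<Sum>\<mu>\<in>?L. inner_n n (Pe n E \<mu> x) u)
        = inner_n n (Pe n E \<nu> x) u + (\<Sum>\<mu>\<in>?L - {\<nu>}. inner_n n (Pe n E \<mu> x) u)"
      by (rule sum.remove[OF finite_eigenvalues[OF G] True])
    also have "(\<Sum>\<mu>\<in>?L - {\<nu>}. inner_n n (Pe n E \<mu> x) u) = 0"
      using eigenspace_orthogonal[OF G Pe_in_eigenspace[OF x] u] by (intro sum.neutral) blast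
    finally show ?thesis
      using unitv_minus_Pe_orthogonal[OF x u]
      unfolding z_def inner_n_diff_left inner_n_sum_left[OF finite_eigenvalues[OF G]] by simp
  next
    case False
    then have "u = (\<lambda>_. 0)" using u unfolding eigenvalues_def by blast
    then show ?thesis by (simp add: inner_n_def)
  qed
  ultimately have "z = (\<lambda>_. 0)" by (rule orthogonal_to_eigenspaces_eq_0[OF G])
  then show ?thesis unfolding z_def by (auto simp: fun_eq_iff)
qed

lemma sum_Pmat:
  assumes G: "graph n E" and x: "x \<in> verts n" and y: "y \<in> verts n"
  shows "(\<Sum>\<mu>\<in>eigenvalues n E. Pmat n E \<mu> x y) = (if x = y then 1 else 0)"
  using fun_cong[OF sum_Pe_eq_unitv[OF G y], of x] by (auto simp: Pmat_def unitv_def)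

section \<open>Angles versus projection entries\<close>

lemma norm_n_Pe: "x \<in> verts n \<Longrightarrow> norm_n n (Pe n E \<mu> x) = sqrt (Pmat n E \<mu> x x)"
  unfolding norm_n_def using Pmat_eq_inner_n[of x n x E \<mu>] by simp

lemma Pe_eq_0_iff: "x \<in> verts n \<Longrightarrow> Pe n E \<mu> x = (\<lambda>_. 0) \<longleftrightarrow> Pmat n E \<mu> x x = 0"
  using inner_n_self_eq_0_iff[OF Pe_in_vecs] Pmat_eq_inner_n[of x n x E \<mu>] by simp

lemma Pmat_diag_nonneg: "x \<in> verts n \<Longrightarrow> Pmat n E \<mu> x x \<ge> 0"
  using Pmat_eq_inner_n[of x n x E \<mu>] inner_n_self_nonneg[of n "Pe n E \<mu> x"] by simp

lemma Pmat_eq_0_if_diag_eq_0: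
  assumes x: "x \<in> verts n" and y: "y \<in> verts n"
    and "Pmat n E \<mu> x x = 0 \<or> Pmat n E \<mu> y y = 0"
  shows "Pmat n E \<mu> x y = 0"
proof -
  have "Pe n E \<mu> x = (\<lambda>_. 0) \<or> Pe n E \<mu> y = (\<lambda>_. 0)"
    using assms(3) Pe_eq_0_iff[OF x] Pe_eq_0_iff[OF y] by blast
  then show ?thesis unfolding Pmat_eq_inner_n[OF x y] by (auto simp: inner_n_def)
qed

lemma alpha_diag: "x \<in> verts n \<Longrightarrow> alpha n E \<mu> x x = sqrt (Pmat n E \<mu> x x)"
  unfolding alpha_def using norm_n_Pe[of x n E \<mu>] by simp

lemma alpha_off_diag:
  assumes x: "x \<in> verts n" and y: "y \<in> verts n" and "x \<noteq> y"
  shows "alpha n E \<mu> x y = (if Pmat n E \<mu> x x = 0 \<or> Pmat n E \<mu> y y = 0 then 0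
      else Pmat n E \<mu> x y / (sqrt (Pmat n E \<mu> x x) * sqrt (Pmat n E \<mu> y y)))"
  using \<open>x \<noteq> y\<close>
  unfolding alpha_def Let_def Pe_eq_0_iff[OF x] Pe_eq_0_iff[OF y] norm_n_Pe[OF x] norm_n_Pe[OF y]
    Pmat_eq_inner_n[OF x y, symmetric]
  by simp

lemma Pmat_eq_alpha_product:
  assumes x: "x \<in> verts n" and y: "y \<in> verts n" and "x \<noteq> y"
  shows "Pmat n E \<mu> x y = alpha n E \<mu> x y * alpha n E \<mu> x x * alpha n E \<mu> y y"
proof (cases "Pmat n E \<mu> x x = 0 \<or> Pmat n E \<mu> y y = 0")
  case True
  then show ?thesis
    using Pmat_eq_0_if_diag_eq_0[OF x y True] alpha_off_diag[OF assms, of E \<mu>] by simp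
next
  case False
  then have "sqrt (Pmat n E \<mu> x x) * sqrt (Pmat n E \<mu> y y) \<noteq> 0" by simp
  then show ?thesis
    using False unfolding alpha_off_diag[OF assms] alpha_diag[OF x] alpha_diag[OF y] by simp
qed

lemma set_eigs: "graph n E \<Longrightarrow> set (eigs n E) = eigenvalues n E"
  unfolding eigs_def using finite_eigenvalues by simp

lemma sum_list_map_eigs:
  "graph n E \<Longrightarrow> sum_list (map f (eigs n E)) = (\<Sum>\<mu>\<in>eigenvalues n E. f \<mu>)"
  using sum_list_distinct_conv_sum_set[of "eigs n E" f] set_eigs by (simp add: eigs_def)

lemma Pstar_eq_diag_imp_eq:
  assumes G: "graph n E" and x: "x \<in> verts n" and y: "y \<in> verts n"
    and "Pstar n E x y = Pstar n E x x"
  shows "x = y"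
proof -
  have "sum_list (Pstar n E x y) = sum_list (Pstar n E x x)" using assms(4) by simp
  then show ?thesis
    unfolding Pstar_def sum_list_map_eigs[OF G] sum_Pmat[OF G x y] sum_Pmat[OF G x x]
    by (simp split: if_splits)
qed

lemma Pmat_eq_cube_if_alpha_eq_diags:
  assumes x: "x \<in> verts n" and y: "y \<in> verts n" and xy: "x \<noteq> y"
    and eq: "alpha n E \<mu> x y = alpha n E \<mu> x x" "alpha n E \<mu> x y = alpha n E \<mu> y y"
  shows "Pmat n E \<mu> x y = alpha n E \<mu> x x ^ 3"
proof -
  define s where "s = alpha n E \<mu> x x"
  have s: "s \<ge> 0" "Pmat n E \<mu> x x = s\<^sup>2" "Pmat n E \<mu> y y = s\<^sup>2"
    using eq Pmat_diag_nonneg[OF x] Pmat_diag_nonneg[OF y]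
    unfolding s_def alpha_diag[OF x] alpha_diag[OF y] by auto
  show ?thesis
  proof (cases "s = 0")
    case True
    then show ?thesis using s Pmat_eq_0_if_diag_eq_0[OF x y] by (simp add: s_def)
  next
    case False
    have "Pmat n E \<mu> x y / (s * s) = s"
      using eq(1) s False unfolding alpha_off_diag[OF x y xy] by (simp add: s_def)
    then show ?thesis using False by (simp add: s_def field_simps power3_eq_cube)
  qed
qed

lemma alphastar_eq_diags_imp_eq:
  assumes G: "graph n E" and x: "x \<in> verts n" and y: "y \<in> verts n"
    and "alphastar n E x y = alphastar n E x x" "alphastar n E x y = alphastar n E y y"
  shows "x = y"
proof (rule ccontr)
  assume xy: "x \<noteq> y"
  let ?L = "eigenvalues n E" and ?s = "\<lambda>\<mu>. alpha n E \<mu> x x"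
  have "alpha n E \<mu> x y = alpha n E \<mu> x x" "alpha n E \<mu> x y = alpha n E \<mu> y y"
    if "\<mu> \<in> ?L" for \<mu>
    using assms(4,5) that set_eigs[OF G] unfolding alphastar_def by simp_all
  then have "(\<Sum>\<mu>\<in>?L. ?s \<mu> ^ 3) = (\<Sum>\<mu>\<in>?L. Pmat n E \<mu> x y)"
    using Pmat_eq_cube_if_alpha_eq_diags[OF x y xy] by simp
  also have "\<dots> = 0" using sum_Pmat[OF G x y] xy by simp
  finally have "\<forall>\<mu>\<in>?L. ?s \<mu> ^ 3 = 0"
    by (subst (asm) sum_nonneg_eq_0_iff[OF finite_eigenvalues[OF G]]) (simp_all add: alpha_diag[OF x] Pmat_diag_nonneg[OF x])
  then have "(\<Sum>\<mu>\<in>?L. Pmat n E \<mu> x x) = 0"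
    by (intro sum.neutral) (simp add: alpha_diag[OF x] Pmat_diag_nonneg[OF x])
  then show False using sum_Pmat[OF G x x] by simp
qed

definition cos_of_gram :: "real \<Rightarrow> real \<Rightarrow> real \<Rightarrow> real" where
  "cos_of_gram p a b = (if a = 0 \<or> b = 0 then 0 else p / (sqrt a * sqrt b))"

definition alphastar_of_Pstar :: "real list \<Rightarrow> real list \<Rightarrow> real list \<Rightarrow> real list" where
  "alphastar_of_Pstar p a b =
     (if p = a \<and> p = b then map sqrt a
      else map (\<lambda>i. cos_of_gram (p ! i) (a ! i) (b ! i)) [0..<length p])"

definition Pstar_of_alphastar :: "real list \<Rightarrow> real list \<Rightarrow> real list \<Rightarrow> real list" where
  "Pstar_of_alphastar p a b =
     (if p = a \<and> p = b then map (\<lambda>t. t\<^sup>2) a else map (\<lambda>i. p ! i * a ! i * b ! i) [0..<length p])"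

lemma alphastar_of_Pstar_eq:
  assumes G: "graph n E" and x: "x \<in> verts n" and y: "y \<in> verts n"
  shows "alphastar_of_Pstar (Pstar n E x y) (Pstar n E x x) (Pstar n E y y) = alphastar n E x y"
proof (cases "x = y")
  case True
  then show ?thesis
    unfolding alphastar_of_Pstar_def Pstar_def alphastar_def by (simp add: alpha_diag[OF y])
next
  case False
  then show ?thesis
    using Pstar_eq_diag_imp_eq[OF G x y] unfolding alphastar_of_Pstar_def
    by (auto intro!: nth_equalityI
        simp: Pstar_def alphastar_def cos_of_gram_def alpha_off_diag[OF x y False])
qed

lemma Pstar_of_alphastar_eq:
  assumes G: "graph n E" and x: "x \<in> verts n" and y: "y \<in> verts n"
  shows "Pstar_of_alphastar (alphastar n E x y) (alphastar n E x x) (alphastar n E y y) = Pstar n E x y"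
proof (cases "x = y")
  case True
  then show ?thesis
    unfolding Pstar_of_alphastar_def Pstar_def alphastar_def
    by (simp add: alpha_diag[OF y] Pmat_diag_nonneg[OF y])
next
  case False
  then show ?thesis
    using alphastar_eq_diags_imp_eq[OF G x y] unfolding Pstar_of_alphastar_def
    by (auto intro!: nth_equalityI
        simp: Pstar_def alphastar_def Pmat_eq_alpha_product[OF x y False])
qed

section \<open>Colour refinement of functionally related pair colourings\<close>

primrec base_colour :: "'c colour \<Rightarrow> 'c" where
  "base_colour (Base c) = c"
| "base_colour (Refine c M) = base_colour c"

text \<open>The base colour of a vertex is its diagonal pair colour \<open>a\<close>, so it is recoloured to
\<open>f a a a\<close>; the \<open>Base\<close> branch at positive depth never occurs for refinement colours.\<close>

fun wl_transfer :: "nat \<Rightarrow> ('c \<Rightarrow> 'c \<Rightarrow> 'c \<Rightarrow> 'd) \<Rightarrow> 'c colour \<Rightarrow> 'd colour" where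
  "wl_transfer 0 f c = (let a = base_colour c in Base (f a a a))"
| "wl_transfer (Suc r) f c = (case c of
      Base a \<Rightarrow> Base (f a a a)
    | Refine c0 M \<Rightarrow> Refine (wl_transfer r f c0)
        (image_mset (\<lambda>(e, d). (f e (base_colour c0) (base_colour d), wl_transfer r f d)) M))"

lemma base_colour_wl_col: "base_colour (wl_col V c r x) = c x x"
  by (induction r) auto

lemma wl_transfer_wl_col:
  assumes "finite V" and f: "\<And>x y. x \<in> V \<Longrightarrow> y \<in> V \<Longrightarrow> f (c x y) (c x x) (c y y) = d x y"
    and "x \<in> V"
  shows "wl_transfer r f (wl_col V c r x) = wl_col V d r x"
  using \<open>x \<in> V\<close>
proof (induction r arbitrary: x)
  case 0
  then show ?case using f[of x x] by (simp add: base_colour_wl_col)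
next
  case (Suc r)
  have "image_mset (\<lambda>y. (f (c x y) (c x x) (c y y), wl_transfer r f (wl_col V c r y))) (mset_set V)
      = image_mset (\<lambda>y. (d x y, wl_col V d r y)) (mset_set V)"
    using f[OF Suc.prems] Suc.IH \<open>finite V\<close> by (intro image_mset_cong) simp
  then show ?case
    using Suc.IH[OF Suc.prems]
    by (simp add: image_mset.compositionality comp_def base_colour_wl_col)
qed

lemma image_mset_wl_transfer_wl_inv:
  assumes "finite V" and "\<And>x y. x \<in> V \<Longrightarrow> y \<in> V \<Longrightarrow> f (c x y) (c x x) (c y y) = d x y"
  shows "image_mset (wl_transfer r f) (wl_inv V c r) = wl_inv V d r"
  unfolding wl_inv_def image_mset.compositionality
  using wl_transfer_wl_col[where V=V and f=f and c=c and d=d, OF assms] assms(1)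
  by (intro image_mset_cong) simp

theorem lemma3p1:
  fixes r n m :: nat and E F :: "nat \<Rightarrow> nat \<Rightarrow> bool"
  assumes "graph n E" and "graph m F"
  shows "wl_inv (verts n) (Pstar n E) r = wl_inv (verts m) (Pstar m F) r
     \<longleftrightarrow> wl_inv (verts n) (alphastar n E) r = wl_inv (verts m) (alphastar m F) r"
proof -
  have alpha_from_P: "image_mset (wl_transfer r alphastar_of_Pstar) (wl_inv (verts k) (Pstar k G) r)
      = wl_inv (verts k) (alphastar k G) r" if "graph k G" for k G
    using alphastar_of_Pstar_eq[OF that] by (intro image_mset_wl_transfer_wl_inv) simp_all
  have P_from_alpha: "image_mset (wl_transfer r Pstar_of_alphastar) (wl_inv (verts k) (alphastar k G) r)
      = wl_inv (verts k) (Pstar k G) r" if "graph k G" for k G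
    using Pstar_of_alphastar_eq[OF that] by (intro image_mset_wl_transfer_wl_inv) simp_all
  show ?thesis
    using alpha_from_P[OF assms(1)] alpha_from_P[OF assms(2)]
      P_from_alpha[OF assms(1)] P_from_alpha[OF assms(2)]
    by metis
qed

end
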